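(* Consider a stochastic $K$-armed bandit with reward vectors in $[-R_{\max},R_{\max}]^K$ drawn i.i.d. with mean $\mathbf r$ having no ties, optimal arm $a^*$ with deterministic policy $\pi^*$, and $\Delta=\min_{a\ne a'}|r(a)-r(a')|$. Given a horizon $T$ (and target accuracy $\epsilon>0$), choosing the learning rate $\alpha=\mathcal O(T^{-3/7})$ and the barrier parameter $\eta=\mathcal O(T^{1/7})$, LB-SGB (defined in the context) ensures sub-linear regret: $$\mathbb E\Big[\sum_{t=1}^T(\pi^*-\pi_{\boldsymbol\theta_t})^\top\mathbf r\Big]\le\mathcal O\big(\Delta^{-2/7}T^{6/7}\big).$$
   Context: Softmax policy $\pi_{\boldsymbol\theta}(a)=e^{\theta(a)}/\sum_be^{\theta(b)}$. LB-SGB with step size $\alpha$ and barrier parameter $\eta$: start from $\boldsymbol\theta=\mathbf 0$; at round $t$ sample $a_t\sim\pi_{\boldsymbol\theta_t}$, observe $R_t(a_t)$, set $\hat r_t(a)=\mathbb I\{a_t=a\}R_t(a_t)/\pi_{\boldsymbol\theta_t}(a)$ and update $\boldsymbol\theta_{t+1}=\boldsymbol\theta_t+\alpha\big[(\mathrm{diag}(\pi_{\boldsymbol\theta_t})-\pi_{\boldsymbol\theta_t}\pi_{\boldsymbol\theta_t}^\top)\hat{\mathbf r}_t+\frac1\eta(\mathbf 1-K\pi_{\boldsymbol\theta_t})\big]$. The hyperparameters depend on the horizon $T$. *)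

theory Defs
  imports "HOL-Probability.Probability"
begin

text \<open>Arms are the elements of a finite type 'k; K = CARD('k).
  Parameters, policies and reward vectors live in real^'k.\<close>

definition softmax :: "real^'k::finite \<Rightarrow> real^'k" where
  "softmax \<theta> = (\<chi> a. exp (\<theta>$a) / (\<Sum>b\<in>UNIV. exp (\<theta>$b)))"

definition rhat :: "real^'k::finite \<Rightarrow> 'k \<Rightarrow> real \<Rightarrow> real^'k" where
  "rhat \<theta> act x = (\<chi> a. if act = a then x / softmax \<theta> $ a else 0)"

text \<open>One LB-SGB update:
  theta + alpha * [ (diag(pi) - pi pi^T) rhat + (1/eta)(1 - K pi) ].\<close>
definition lbsgb_step :: "real \<Rightarrow> real \<Rightarrow> real^'k::finite \<Rightarrow> 'k \<Rightarrow> real \<Rightarrow> real^'k" where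
  "lbsgb_step \<alpha> \<eta> \<theta> act x =
     (let p = softmax \<theta>; rh = rhat \<theta> act x in
      \<theta> + \<alpha> *\<^sub>R ((\<chi> a. p$a * rh$a - p$a * (\<Sum>b\<in>UNIV. p$b * rh$b))
                 + (1 / \<eta>) *\<^sub>R (\<chi> a. 1 - real CARD('k) * p$a)))"

text \<open>Optimal arm (unique when the mean has no ties) and the deterministic optimal policy.\<close>
definition opt_arm :: "real^'k::finite \<Rightarrow> 'k" where
  "opt_arm r = (THE a. \<forall>b. r$b \<le> r$a)"

definition pi_star :: "real^'k::finite \<Rightarrow> real^'k" where
  "pi_star r = (\<chi> a. if a = opt_arm r then 1 else 0)"

definition inst_regret :: "real^'k::finite \<Rightarrow> real^'k \<Rightarrow> real" where
  "inst_regret r \<theta> = (pi_star r - softmax \<theta>) \<bullet> r"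

definition mean_reward :: "(real^'k::finite) measure \<Rightarrow> real^'k" where
  "mean_reward D = integral\<^sup>L D (\<lambda>R. R)"

text \<open>Expected cumulative regret of n further rounds of LB-SGB started at parameter theta,
  where in each round a ~ softmax theta, a fresh reward vector R ~ D is drawn
  (i.i.d. across rounds) and the update uses R(a).  This is the expectation over the
  whole random trajectory, written via the tower property (backward recursion).\<close>
primrec exp_regret :: "(real^'k::finite) measure \<Rightarrow> real \<Rightarrow> real \<Rightarrow> nat \<Rightarrow> real^'k \<Rightarrow> real" where
  "exp_regret D \<alpha> \<eta> 0 \<theta> = 0"
| "exp_regret D \<alpha> \<eta> (Suc n) \<theta> =
     inst_regret (mean_reward D) \<theta>
     + (\<Sum>a\<in>UNIV. softmax \<theta> $ a *
          integral\<^sup>L D (\<lambda>R. exp_regret D \<alpha> \<eta> n (lbsgb_step \<alpha> \<eta> \<theta> a (R$a))))"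

definition gap :: "real^'k::finite \<Rightarrow> real" where
  "gap r = Min {\<bar>r$a - r$b\<bar> | a b. a \<noteq> b}"

end

theory Submission
  imports Defs
begin

text \<open>LB-SGB is stochastic gradient ascent on the log-barrier objective
  \<open>J(\<theta>) = \<pi>\<^sub>\<theta>\<cdot>r + \<eta>\<^sup>-\<^sup>1 \<Sigma>\<^sub>a ln \<pi>\<^sub>\<theta>(a)\<close>: the update direction is an unbiased estimate of
  \<open>\<nabla>J\<close> bounded by \<open>G = R + K/\<eta>\<close>, and \<open>J\<close> is smooth from below with constant \<open>L = 10R + K/\<eta>\<close>,
  so one step raises the expectation of \<open>J\<close> by at least \<open>\<alpha>\<parallel>\<nabla>J\<parallel>\<^sup>2 - L(\<alpha>G)\<^sup>2\<close>.
  The barrier also makes the regret gradient dominated: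
  \<open>r(a\<^sup>*) - \<pi>\<^sub>\<theta>\<cdot>r \<le> 2K/\<eta> + M (\<partial>\<^sub>a\<^sub>*J)\<^sup>2\<close> with \<open>M = K\<eta> + 8R\<eta>\<^sup>2\<close>.
  Hence the nonnegative potential \<open>(M/\<alpha>)(R - J(\<theta>))\<close> pays for each round up to \<open>2K/\<eta> + M\<alpha>LG\<^sup>2\<close>,
  and the expected regret over \<open>T\<close> rounds is \<open>O(T/\<eta> + T\<alpha>\<eta>\<^sup>2 + \<eta>\<^sup>2/\<alpha>)\<close>.
  For \<open>\<alpha> \<sim> T\<^sup>-\<^sup>3\<^sup>/\<^sup>7\<close> and \<open>\<eta> = T\<^sup>1\<^sup>/\<^sup>7\<close> every term is \<open>O(T\<^sup>6\<^sup>/\<^sup>7)\<close>; since the gap is at most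
  \<open>2R\<close>, this is in particular \<open>O(\<Delta>\<^sup>-\<^sup>2\<^sup>/\<^sup>7 T\<^sup>6\<^sup>/\<^sup>7)\<close>.\<close>

lemma sum_exp_vec_pos: "0 < (\<Sum>b\<in>UNIV. exp ((\<theta>::real^'k::finite) $ b))"
  by (rule sum_pos) auto

lemma softmax_pos: "0 < softmax (\<theta>::real^'k::finite) $ a"
  unfolding softmax_def using sum_exp_vec_pos[of \<theta>] by simp

lemma sum_softmax: "(\<Sum>b\<in>UNIV. softmax (\<theta>::real^'k::finite) $ b) = 1"
  unfolding softmax_def using sum_exp_vec_pos[of \<theta>] by (simp add: sum_divide_distrib[symmetric])

lemma softmax_le_1: "softmax (\<theta>::real^'k::finite) $ a \<le> 1"
proof -
  have "softmax \<theta> $ a \<le> (\<Sum>b\<in>UNIV. softmax \<theta> $ b)"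
    by (rule member_le_sum) (auto intro: less_imp_le softmax_pos)
  then show ?thesis by (simp add: sum_softmax)
qed

lemma ln_softmax: "ln (softmax (\<theta>::real^'k::finite) $ a) = \<theta> $ a - ln (\<Sum>b\<in>UNIV. exp (\<theta> $ b))"
  unfolding softmax_def using sum_exp_vec_pos[of \<theta>] by (simp add: ln_div)

lemma softmax_add:
  fixes \<theta> \<Delta> :: "real^'k::finite"
  shows "softmax (\<theta> + \<Delta>) $ a
           = softmax \<theta> $ a * exp (\<Delta> $ a) / (\<Sum>c\<in>UNIV. softmax \<theta> $ c * exp (\<Delta> $ c))"
proof -
  define Z where "Z = (\<Sum>b\<in>UNIV. exp (\<theta> $ b))"
  have Z: "0 < Z" unfolding Z_def by (rule sum_exp_vec_pos)
  have "(\<Sum>c\<in>UNIV. softmax \<theta> $ c * exp (\<Delta> $ c)) = (\<Sum>c\<in>UNIV. exp (\<theta> $ c + \<Delta> $ c)) / Z"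
    unfolding softmax_def Z_def[symmetric] by (simp add: sum_divide_distrib exp_add)
  moreover have "0 < (\<Sum>c\<in>UNIV. exp (\<theta> $ c + \<Delta> $ c))" by (rule sum_pos) auto
  ultimately show ?thesis using Z
    unfolding softmax_def Z_def[symmetric] by (simp add: exp_add field_simps)
qed

lemma exp_remainder_bounds:
  fixes x \<delta> :: real
  assumes x: "\<bar>x\<bar> \<le> \<delta>" and \<delta>: "\<delta> \<le> 1"
  shows "0 \<le> exp x - 1 - x" and "exp x - 1 - x \<le> \<delta>\<^sup>2"
proof -
  show "0 \<le> exp x - 1 - x" using exp_ge_add_one_self[of x] by linarith
  have "exp x - 1 - x \<le> x\<^sup>2"
  proof (cases "0 \<le> x")
    case True
    then show ?thesis using exp_bound[of x] x \<delta> by simp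
  next
    case False
    define y where "y = - x"
    have y: "0 \<le> y" "y \<le> 1" using False x \<delta> by (auto simp: y_def)
    have "(1 - y + y\<^sup>2) * (1 + y + y\<^sup>2 / 2) = 1 + y\<^sup>2 / 2 + y ^ 3 / 2 + y ^ 4 / 2"
      by (simp add: field_simps power2_eq_square power3_eq_cube power4_eq_xxxx)
    then have "1 \<le> (1 - y + y\<^sup>2) * (1 + y + y\<^sup>2 / 2)" using y by simp
    also have "\<dots> \<le> (1 - y + y\<^sup>2) * exp y"
      using y exp_lower_Taylor_quadratic[OF y(1)] by (intro mult_left_mono) auto
    finally have "exp (- y) \<le> 1 - y + y\<^sup>2" by (simp add: exp_minus field_simps)
    then show ?thesis by (simp add: y_def)
  qed
  also have "x\<^sup>2 \<le> \<delta>\<^sup>2" using x power2_le_iff_abs_le[of \<delta> x] by force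
  finally show "exp x - 1 - x \<le> \<delta>\<^sup>2" .
qed

lemma abs_sum_weighted_le:
  fixes p f :: "'a \<Rightarrow> real"
  assumes "finite A" "\<And>b. b \<in> A \<Longrightarrow> 0 \<le> p b" "sum p A = 1" "\<And>b. b \<in> A \<Longrightarrow> \<bar>f b\<bar> \<le> c"
  shows "\<bar>\<Sum>b\<in>A. p b * f b\<bar> \<le> c"
proof -
  have "\<bar>\<Sum>b\<in>A. p b * f b\<bar> \<le> (\<Sum>b\<in>A. \<bar>p b * f b\<bar>)" by (rule sum_abs)
  also have "\<dots> \<le> (\<Sum>b\<in>A. p b * c)"
    by (rule sum_mono) (use assms in \<open>auto simp: abs_mult intro: mult_left_mono\<close>)
  also have "\<dots> = c" using assms(3) by (simp add: sum_distrib_right[symmetric])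
  finally show ?thesis .
qed

lemma ratio_perturbation_le:
  fixes Y W m \<delta> c :: real
  assumes Y: "\<bar>Y\<bar> \<le> c * \<delta>" and W: "\<bar>W\<bar> \<le> c * \<delta>\<^sup>2"
    and m: "1 - \<delta> \<le> m" "m \<le> 1 + \<delta> + \<delta>\<^sup>2"
    and \<delta>: "0 \<le> \<delta>" "\<delta> \<le> 1/2" and c: "0 \<le> c"
  shows "\<bar>(Y + W) / m - Y\<bar> \<le> 5 * c * \<delta>\<^sup>2"
proof -
  have m_half: "1/2 \<le> m" using m \<delta> by linarith
  have "\<bar>m - 1\<bar> \<le> \<delta> + \<delta>\<^sup>2" unfolding abs_le_iff using m zero_le_power2[of \<delta>] by linarith
  then have "\<bar>(m - 1) * Y\<bar> \<le> (\<delta> + \<delta>\<^sup>2) * (c * \<delta>)"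
    unfolding abs_mult using Y \<delta> by (intro mult_mono) auto
  also have "\<dots> = c * \<delta>\<^sup>2 * (1 + \<delta>)" by (simp add: power2_eq_square algebra_simps)
  also have "\<dots> \<le> c * \<delta>\<^sup>2 * (3/2)" using \<delta> c by (intro mult_left_mono) auto
  finally have "\<bar>W - (m - 1) * Y\<bar> \<le> 5/2 * c * \<delta>\<^sup>2" using W by linarith
  then have "\<bar>W - (m - 1) * Y\<bar> / m \<le> 5/2 * c * \<delta>\<^sup>2 / (1/2)"
    using m_half c by (intro frac_le) auto
  moreover have "(Y + W) / m - Y = (W - (m - 1) * Y) / m" using m_half by (simp add: field_simps)
  ultimately show ?thesis using m_half by (simp add: abs_divide)
qed

definition policy_value :: "real^'k::finite \<Rightarrow> real^'k \<Rightarrow> real" where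
  "policy_value r \<theta> = (\<Sum>b\<in>UNIV. softmax \<theta> $ b * r $ b)"

definition barrier_objective :: "real \<Rightarrow> real^'k::finite \<Rightarrow> real^'k \<Rightarrow> real" where
  "barrier_objective \<eta> r \<theta> = policy_value r \<theta> + (1/\<eta>) * (\<Sum>b\<in>UNIV. ln (softmax \<theta> $ b))"

text \<open>The partial derivative of \<^const>\<open>barrier_objective\<close> in \<open>\<theta> $ b\<close>; only the first-order
  lower bound \<open>barrier_objective_add_ge\<close> below is needed.\<close>
definition barrier_grad :: "real \<Rightarrow> real^'k::finite \<Rightarrow> real^'k \<Rightarrow> 'k \<Rightarrow> real" where
  "barrier_grad \<eta> r \<theta> b =
     softmax \<theta> $ b * (r $ b - policy_value r \<theta>) + (1/\<eta>) * (1 - real CARD('k) * softmax \<theta> $ b)"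

definition stoch_grad :: "real \<Rightarrow> real^'k::finite \<Rightarrow> 'k \<Rightarrow> real \<Rightarrow> 'k \<Rightarrow> real" where
  "stoch_grad \<eta> \<theta> a x b =
     x * ((if b = a then 1 else 0) - softmax \<theta> $ b) + (1/\<eta>) * (1 - real CARD('k) * softmax \<theta> $ b)"

lemma abs_policy_value_le:
  fixes r \<theta> :: "real^'k::finite"
  assumes "\<And>b. \<bar>r $ b\<bar> \<le> R"
  shows "\<bar>policy_value r \<theta>\<bar> \<le> R"
  unfolding policy_value_def
  by (rule abs_sum_weighted_le) (use softmax_pos sum_softmax assms in \<open>auto intro: less_imp_le\<close>)

lemma policy_value_le_max:
  fixes r \<theta> :: "real^'k::finite"
  assumes "\<And>b. r $ b \<le> r $ a"
  shows "policy_value r \<theta> \<le> r $ a"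
proof -
  have "policy_value r \<theta> \<le> (\<Sum>b\<in>UNIV. softmax \<theta> $ b * r $ a)"
    unfolding policy_value_def
    by (rule sum_mono) (use softmax_pos assms in \<open>auto intro: mult_left_mono less_imp_le\<close>)
  also have "\<dots> = r $ a" by (simp add: sum_distrib_right[symmetric] sum_softmax)
  finally show ?thesis .
qed

lemma sum_ln_softmax_add_ge:
  fixes \<theta> \<Delta> :: "real^'k::finite"
  assumes \<Delta>: "\<And>b. \<bar>\<Delta> $ b\<bar> \<le> \<delta>" and \<delta>: "\<delta> \<le> 1"
  shows "(\<Sum>b\<in>UNIV. ln (softmax (\<theta> + \<Delta>) $ b))
           \<ge> (\<Sum>b\<in>UNIV. ln (softmax \<theta> $ b))
             + (\<Sum>b\<in>UNIV. (1 - real CARD('k) * softmax \<theta> $ b) * \<Delta> $ b) - real CARD('k) * \<delta>\<^sup>2"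
proof -
  define p where "p = softmax \<theta>"
  define m where "m = (\<Sum>c\<in>UNIV. p $ c * exp (\<Delta> $ c))"
  have p: "0 < p $ b" for b unfolding p_def by (rule softmax_pos)
  have m: "0 < m" unfolding m_def by (rule sum_pos) (auto intro: p mult_pos_pos)
  have ln_shift: "ln (softmax (\<theta> + \<Delta>) $ b) = ln (p $ b) + \<Delta> $ b - ln m" for b
    unfolding softmax_add p_def[symmetric] m_def[symmetric] using p[of b] m
    by (simp add: ln_div ln_mult)
  have "ln m \<le> m - 1" using m by (rule ln_le_minus_one)
  also have "m - 1 = (\<Sum>c\<in>UNIV. p $ c * (exp (\<Delta> $ c) - 1))"
    unfolding m_def p_def by (simp add: algebra_simps sum_subtractf sum_softmax)
  also have "\<dots> \<le> (\<Sum>c\<in>UNIV. p $ c * (\<Delta> $ c + \<delta>\<^sup>2))"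
  proof (rule sum_mono)
    fix c :: 'k
    have "exp (\<Delta> $ c) - 1 \<le> \<Delta> $ c + \<delta>\<^sup>2" using exp_remainder_bounds(2)[OF \<Delta> \<delta>, of c] by simp
    then show "p $ c * (exp (\<Delta> $ c) - 1) \<le> p $ c * (\<Delta> $ c + \<delta>\<^sup>2)"
      using p[of c] by (intro mult_left_mono) auto
  qed
  also have "\<dots> = (\<Sum>c\<in>UNIV. p $ c * \<Delta> $ c) + \<delta>\<^sup>2"
    unfolding p_def by (simp add: algebra_simps sum.distrib sum_distrib_right[symmetric] sum_softmax)
  finally have "real CARD('k) * ln m \<le> real CARD('k) * ((\<Sum>c\<in>UNIV. p $ c * \<Delta> $ c) + \<delta>\<^sup>2)"
    by (intro mult_left_mono) auto
  then show ?thesis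
    unfolding ln_shift p_def[symmetric]
    by (simp add: algebra_simps sum.distrib sum_subtractf sum_distrib_left)
qed

lemma sum_softmax_exp_bounds:
  fixes \<theta> \<Delta> :: "real^'k::finite"
  assumes \<Delta>: "\<And>b. \<bar>\<Delta> $ b\<bar> \<le> \<delta>" and \<delta>: "\<delta> \<le> 1"
  shows "1 - \<delta> \<le> (\<Sum>b\<in>UNIV. softmax \<theta> $ b * exp (\<Delta> $ b))"
    and "(\<Sum>b\<in>UNIV. softmax \<theta> $ b * exp (\<Delta> $ b)) \<le> 1 + \<delta> + \<delta>\<^sup>2"
proof -
  have exp_bounds: "1 - \<delta> \<le> exp (\<Delta> $ b) \<and> exp (\<Delta> $ b) \<le> 1 + \<delta> + \<delta>\<^sup>2" for b
    using exp_remainder_bounds[OF \<Delta>[of b] \<delta>] \<Delta>[of b] by (auto simp: abs_le_iff)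
  have "(\<Sum>b\<in>UNIV. softmax \<theta> $ b * (1 - \<delta>)) \<le> (\<Sum>b\<in>UNIV. softmax \<theta> $ b * exp (\<Delta> $ b))"
    using exp_bounds by (intro sum_mono mult_left_mono) (auto intro: less_imp_le softmax_pos)
  then show "1 - \<delta> \<le> (\<Sum>b\<in>UNIV. softmax \<theta> $ b * exp (\<Delta> $ b))"
    by (simp add: sum_distrib_right[symmetric] sum_softmax)
  have "(\<Sum>b\<in>UNIV. softmax \<theta> $ b * exp (\<Delta> $ b)) \<le> (\<Sum>b\<in>UNIV. softmax \<theta> $ b * (1 + \<delta> + \<delta>\<^sup>2))"
    using exp_bounds by (intro sum_mono mult_left_mono) (auto intro: less_imp_le softmax_pos)
  then show "(\<Sum>b\<in>UNIV. softmax \<theta> $ b * exp (\<Delta> $ b)) \<le> 1 + \<delta> + \<delta>\<^sup>2"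
    by (simp add: sum_distrib_right[symmetric] sum_softmax)
qed

lemma policy_value_add:
  fixes \<theta> \<Delta> r :: "real^'k::finite"
  shows "policy_value r (\<theta> + \<Delta>) = policy_value r \<theta>
           + (\<Sum>b\<in>UNIV. softmax \<theta> $ b * exp (\<Delta> $ b) * (r $ b - policy_value r \<theta>))
             / (\<Sum>b\<in>UNIV. softmax \<theta> $ b * exp (\<Delta> $ b))"
proof -
  define p where "p = softmax \<theta>"
  define v where "v = policy_value r \<theta>"
  define m where "m = (\<Sum>b\<in>UNIV. p $ b * exp (\<Delta> $ b))"
  have "0 < m" unfolding m_def p_def by (rule sum_pos) (auto intro: softmax_pos mult_pos_pos)
  moreover have "(\<Sum>b\<in>UNIV. p $ b * exp (\<Delta> $ b) * r $ b)
                   = (\<Sum>b\<in>UNIV. p $ b * exp (\<Delta> $ b) * (r $ b - v)) + v * m"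
    unfolding m_def by (simp add: algebra_simps sum_subtractf sum_distrib_left)
  ultimately show ?thesis
    unfolding policy_value_def[of r "\<theta> + \<Delta>"] softmax_add p_def[symmetric] m_def[symmetric] v_def[symmetric]
    by (simp add: sum_divide_distrib[symmetric] field_simps)
qed

lemma policy_value_add_ge:
  fixes \<theta> \<Delta> r :: "real^'k::finite"
  assumes \<Delta>: "\<And>b. \<bar>\<Delta> $ b\<bar> \<le> \<delta>" and \<delta>: "\<delta> \<le> 1/2" and r: "\<And>b. \<bar>r $ b\<bar> \<le> R"
  shows "policy_value r (\<theta> + \<Delta>)
           \<ge> policy_value r \<theta> + (\<Sum>b\<in>UNIV. softmax \<theta> $ b * (r $ b - policy_value r \<theta>) * \<Delta> $ b)
             - 10 * R * \<delta>\<^sup>2"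
proof -
  define p where "p = softmax \<theta>"
  define v where "v = policy_value r \<theta>"
  define \<rho> where "\<rho> b = exp (\<Delta> $ b) - 1 - \<Delta> $ b" for b
  define Y where "Y = (\<Sum>b\<in>UNIV. p $ b * ((r $ b - v) * \<Delta> $ b))"
  define W where "W = (\<Sum>b\<in>UNIV. p $ b * ((r $ b - v) * \<rho> b))"
  have p: "0 \<le> p $ b" for b unfolding p_def by (rule less_imp_le[OF softmax_pos])
  have sum_p: "(\<Sum>b\<in>UNIV. p $ b) = 1" unfolding p_def by (rule sum_softmax)
  have \<delta>0: "0 \<le> \<delta>" using \<Delta>[of undefined] by linarith
  have R0: "0 \<le> R" using r[of undefined] by linarith
  have \<rho>: "0 \<le> \<rho> b \<and> \<rho> b \<le> \<delta>\<^sup>2" for b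
    unfolding \<rho>_def using exp_remainder_bounds[OF \<Delta>[of b]] \<delta> by simp
  have u: "\<bar>r $ b - v\<bar> \<le> 2 * R" for b
    using r[of b] abs_policy_value_le[OF r, of \<theta>] unfolding v_def by linarith
  have Y: "\<bar>Y\<bar> \<le> 2 * R * \<delta>" unfolding Y_def
    by (rule abs_sum_weighted_le) (use p sum_p u \<Delta> \<delta>0 R0 in \<open>auto simp: abs_mult intro!: mult_mono\<close>)
  have W: "\<bar>W\<bar> \<le> 2 * R * \<delta>\<^sup>2" unfolding W_def
    by (rule abs_sum_weighted_le) (use p sum_p u \<rho> R0 in \<open>auto simp: abs_mult intro!: mult_mono\<close>)
  have "(\<Sum>b\<in>UNIV. p $ b * (r $ b - v)) = 0"
    using sum_p unfolding v_def policy_value_def p_def[symmetric]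
    by (simp add: algebra_simps sum_subtractf sum_distrib_right[symmetric])
  moreover have "(\<Sum>b\<in>UNIV. p $ b * exp (\<Delta> $ b) * (r $ b - v))
                   = (\<Sum>b\<in>UNIV. p $ b * (r $ b - v)) + Y + W"
    unfolding Y_def W_def sum.distrib[symmetric] \<rho>_def by (rule sum.cong) (simp_all add: algebra_simps)
  ultimately have "policy_value r (\<theta> + \<Delta>) = v + (Y + W) / (\<Sum>b\<in>UNIV. p $ b * exp (\<Delta> $ b))"
    using policy_value_add[of r \<theta> \<Delta>] unfolding p_def v_def by simp
  moreover have "\<bar>(Y + W) / (\<Sum>b\<in>UNIV. p $ b * exp (\<Delta> $ b)) - Y\<bar> \<le> 5 * (2 * R) * \<delta>\<^sup>2"
    using sum_softmax_exp_bounds[OF \<Delta>, of \<theta>] \<delta> \<delta>0 R0 Y W unfolding p_def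
    by (intro ratio_perturbation_le) auto
  moreover have "(\<Sum>b\<in>UNIV. softmax \<theta> $ b * (r $ b - policy_value r \<theta>) * \<Delta> $ b) = Y"
    unfolding Y_def p_def v_def by (simp add: mult.assoc)
  ultimately show ?thesis unfolding v_def by linarith
qed

lemma barrier_objective_add_ge:
  fixes \<theta> \<Delta> r :: "real^'k::finite"
  assumes \<Delta>: "\<And>b. \<bar>\<Delta> $ b\<bar> \<le> \<delta>" and \<delta>: "\<delta> \<le> 1/2" and r: "\<And>b. \<bar>r $ b\<bar> \<le> R" and \<eta>: "0 < \<eta>"
  shows "barrier_objective \<eta> r (\<theta> + \<Delta>)
           \<ge> barrier_objective \<eta> r \<theta> + (\<Sum>b\<in>UNIV. barrier_grad \<eta> r \<theta> b * \<Delta> $ b)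
             - (10 * R + real CARD('k) / \<eta>) * \<delta>\<^sup>2"
proof -
  have grad_split: "(\<Sum>b\<in>UNIV. barrier_grad \<eta> r \<theta> b * \<Delta> $ b)
      = (\<Sum>b\<in>UNIV. softmax \<theta> $ b * (r $ b - policy_value r \<theta>) * \<Delta> $ b)
        + (1/\<eta>) * (\<Sum>b\<in>UNIV. (1 - real CARD('k) * softmax \<theta> $ b) * \<Delta> $ b)"
  proof -
    have "(\<Sum>b\<in>UNIV. barrier_grad \<eta> r \<theta> b * \<Delta> $ b)
        = (\<Sum>b\<in>UNIV. softmax \<theta> $ b * (r $ b - policy_value r \<theta>) * \<Delta> $ b
                       + (1/\<eta>) * ((1 - real CARD('k) * softmax \<theta> $ b) * \<Delta> $ b))"
      by (rule sum.cong) (simp_all add: barrier_grad_def algebra_simps)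
    then show ?thesis by (simp add: sum.distrib sum_distrib_left)
  qed
  have "(1/\<eta>) * ((\<Sum>b\<in>UNIV. ln (softmax \<theta> $ b))
          + (\<Sum>b\<in>UNIV. (1 - real CARD('k) * softmax \<theta> $ b) * \<Delta> $ b) - real CARD('k) * \<delta>\<^sup>2)
        \<le> (1/\<eta>) * (\<Sum>b\<in>UNIV. ln (softmax (\<theta> + \<Delta>) $ b))"
    using sum_ln_softmax_add_ge[OF \<Delta>] \<delta> \<eta> by (intro mult_left_mono) auto
  then show ?thesis
    using policy_value_add_ge[OF \<Delta> \<delta> r, of \<theta>] unfolding barrier_objective_def grad_split
    by (simp add: algebra_simps)
qed

lemma barrier_objective_le:
  fixes r \<theta> :: "real^'k::finite"
  assumes "\<And>b. \<bar>r $ b\<bar> \<le> R" and "0 < \<eta>"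
  shows "barrier_objective \<eta> r \<theta> \<le> R"
proof -
  have "(\<Sum>b\<in>UNIV. ln (softmax \<theta> $ b)) \<le> 0"
    by (intro sum_nonpos) (metis ln_le_zero_iff softmax_pos softmax_le_1)
  then have "(1/\<eta>) * (\<Sum>b\<in>UNIV. ln (softmax \<theta> $ b)) \<le> 0"
    using assms(2) by (simp add: divide_nonpos_pos)
  then show ?thesis
    unfolding barrier_objective_def using abs_policy_value_le[OF assms(1), of \<theta>] by linarith
qed

lemma barrier_objective_zero:
  "barrier_objective \<eta> r (0::real^'k::finite)
     = policy_value r 0 - real CARD('k) * ln (real CARD('k)) / \<eta>"
  unfolding barrier_objective_def ln_softmax by simp

lemma barrier_objective_zero_ge:
  fixes r :: "real^'k::finite"
  assumes r: "\<And>b. \<bar>r $ b\<bar> \<le> R" and \<eta>: "1 \<le> \<eta>"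
  shows "R - barrier_objective \<eta> r 0 \<le> 2 * R + real CARD('k) * ln (real CARD('k))"
proof -
  have "0 \<le> real CARD('k) * ln (real CARD('k))" by simp
  from mult_left_mono[OF \<eta> this]
  have "real CARD('k) * ln (real CARD('k)) / \<eta> \<le> real CARD('k) * ln (real CARD('k))"
    using \<eta> by (simp add: divide_le_eq)
  then show ?thesis
    using abs_policy_value_le[OF r, of 0] unfolding barrier_objective_zero by (simp add: abs_le_iff)
qed

lemma lbsgb_step_eq_stoch_grad:
  "lbsgb_step \<alpha> \<eta> \<theta> a x = \<theta> + \<alpha> *\<^sub>R (\<chi> b. stoch_grad \<eta> \<theta> a x b)"
proof -
  have pa: "softmax \<theta> $ a \<noteq> 0" using softmax_pos[of \<theta> a] by simp
  have "(\<Sum>b\<in>UNIV. softmax \<theta> $ b * rhat \<theta> a x $ b) = (\<Sum>b\<in>UNIV. if b = a then x else 0)"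
    by (rule sum.cong) (use pa in \<open>auto simp: rhat_def\<close>)
  then have "(\<Sum>b\<in>UNIV. softmax \<theta> $ b * rhat \<theta> a x $ b) = x" by simp
  then show ?thesis
    unfolding lbsgb_step_def Let_def by (simp add: vec_eq_iff stoch_grad_def rhat_def pa algebra_simps)
qed

lemma abs_stoch_grad_le:
  assumes "\<bar>x\<bar> \<le> R" and "0 < \<eta>"
  shows "\<bar>stoch_grad \<eta> (\<theta>::real^'k::finite) a x b\<bar> \<le> R + real CARD('k) / \<eta>"
proof -
  define p where "p = softmax \<theta> $ b"
  have p: "0 < p" "p \<le> 1" unfolding p_def by (auto intro: softmax_pos softmax_le_1)
  have "\<bar>x\<bar> * \<bar>(if b = a then 1 else 0) - p\<bar> \<le> R * 1"
    using assms(1) p by (intro mult_mono) auto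
  then have reward_part: "\<bar>x * ((if b = a then 1 else 0) - p)\<bar> \<le> R" by (simp add: abs_mult)
  have "\<bar>1 - real CARD('k) * p\<bar> \<le> real CARD('k)"
  proof -
    have "1 \<le> real CARD('k)" by simp
    moreover have "real CARD('k) * p \<le> real CARD('k)" using p by (simp add: mult_left_le)
    moreover have "0 \<le> real CARD('k) * p" using p by simp
    ultimately show ?thesis unfolding abs_le_iff by linarith
  qed
  then have barrier_part: "\<bar>(1/\<eta>) * (1 - real CARD('k) * p)\<bar> \<le> real CARD('k) / \<eta>"
    using assms(2) by (simp add: abs_mult divide_right_mono)
  show ?thesis
    unfolding stoch_grad_def p_def[symmetric]
    by (rule order_trans[OF abs_triangle_ineq add_mono[OF reward_part barrier_part]])
qed

lemma sum_softmax_stoch_grad: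
  fixes \<theta> r :: "real^'k::finite"
  shows "(\<Sum>a\<in>UNIV. softmax \<theta> $ a * stoch_grad \<eta> \<theta> a (r $ a) b) = barrier_grad \<eta> r \<theta> b"
proof -
  define p where "p = softmax \<theta>"
  have "(\<Sum>a\<in>UNIV. p $ a * stoch_grad \<eta> \<theta> a (r $ a) b)
      = (\<Sum>a\<in>UNIV. (if a = b then p $ a * r $ a else 0) - p $ b * (p $ a * r $ a)
                     + ((1/\<eta>) * (1 - real CARD('k) * p $ b)) * p $ a)"
    by (rule sum.cong) (auto simp: stoch_grad_def p_def algebra_simps)
  also have "\<dots> = p $ b * r $ b - p $ b * (\<Sum>a\<in>UNIV. p $ a * r $ a)
                  + (1/\<eta>) * (1 - real CARD('k) * p $ b) * (\<Sum>a\<in>UNIV. p $ a)"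
    by (simp add: sum.distrib sum_subtractf sum_distrib_left)
  also have "\<dots> = barrier_grad \<eta> r \<theta> b"
    unfolding barrier_grad_def policy_value_def p_def by (simp add: sum_softmax algebra_simps)
  finally show ?thesis unfolding p_def .
qed

lemma inner_stoch_grad_eq:
  "(\<Sum>b\<in>UNIV. w b * stoch_grad \<eta> (\<theta>::real^'k::finite) a x b)
     = x * (w a - (\<Sum>b\<in>UNIV. w b * softmax \<theta> $ b))
       + (\<Sum>b\<in>UNIV. w b * ((1/\<eta>) * (1 - real CARD('k) * softmax \<theta> $ b)))"
proof -
  have "(\<Sum>b\<in>UNIV. w b * stoch_grad \<eta> \<theta> a x b)
      = (\<Sum>b\<in>UNIV. (if b = a then x * w b else 0) - x * (w b * softmax \<theta> $ b)
                     + w b * ((1/\<eta>) * (1 - real CARD('k) * softmax \<theta> $ b)))"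
    by (rule sum.cong) (auto simp: stoch_grad_def algebra_simps)
  also have "\<dots> = x * w a - x * (\<Sum>b\<in>UNIV. w b * softmax \<theta> $ b)
                  + (\<Sum>b\<in>UNIV. w b * ((1/\<eta>) * (1 - real CARD('k) * softmax \<theta> $ b)))"
    by (simp add: sum.distrib sum_subtractf sum_distrib_left)
  finally show ?thesis by (simp add: algebra_simps)
qed

lemma sum_softmax_inner_stoch_grad:
  fixes \<theta> r :: "real^'k::finite"
  shows "(\<Sum>a\<in>UNIV. softmax \<theta> $ a * (\<Sum>b\<in>UNIV. w b * stoch_grad \<eta> \<theta> a (r $ a) b))
           = (\<Sum>b\<in>UNIV. w b * barrier_grad \<eta> r \<theta> b)"
proof -
  have "(\<Sum>a\<in>UNIV. softmax \<theta> $ a * (\<Sum>b\<in>UNIV. w b * stoch_grad \<eta> \<theta> a (r $ a) b))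
      = (\<Sum>b\<in>UNIV. w b * (\<Sum>a\<in>UNIV. softmax \<theta> $ a * stoch_grad \<eta> \<theta> a (r $ a) b))"
    by (simp add: sum_distrib_left algebra_simps) (rule sum.swap)
  then show ?thesis by (simp add: sum_softmax_stoch_grad)
qed

lemma barrier_objective_lbsgb_step_ge:
  fixes \<theta> r :: "real^'k::finite" and R \<eta> :: real
  defines "G \<equiv> R + real CARD('k) / \<eta>"
  assumes x: "\<bar>x\<bar> \<le> R" and r: "\<And>b. \<bar>r $ b\<bar> \<le> R"
    and \<alpha>: "0 < \<alpha>" and \<eta>: "0 < \<eta>" and small: "\<alpha> * G \<le> 1/2"
  shows "barrier_objective \<eta> r (lbsgb_step \<alpha> \<eta> \<theta> a x)
           \<ge> barrier_objective \<eta> r \<theta> + \<alpha> * (\<Sum>b\<in>UNIV. barrier_grad \<eta> r \<theta> b * stoch_grad \<eta> \<theta> a x b)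
             - (10 * R + real CARD('k) / \<eta>) * (\<alpha> * G)\<^sup>2"
proof -
  define \<Delta> where "\<Delta> = \<alpha> *\<^sub>R (\<chi> b. stoch_grad \<eta> \<theta> a x b)"
  have "\<bar>\<Delta> $ b\<bar> \<le> \<alpha> * G" for b
    unfolding \<Delta>_def G_def using abs_stoch_grad_le[OF x \<eta>] \<alpha>
    by (simp add: abs_mult mult_left_mono)
  from barrier_objective_add_ge[OF this small r \<eta>, of \<theta>]
  show ?thesis
    unfolding lbsgb_step_eq_stoch_grad \<Delta>_def[symmetric]
    by (simp add: \<Delta>_def sum_distrib_left algebra_simps)
qed

lemma inst_regret_eq:
  fixes r \<theta> :: "real^'k::finite"
  shows "inst_regret r \<theta> = r $ opt_arm r - policy_value r \<theta>"
proof -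
  have "inst_regret r \<theta> = (\<Sum>i\<in>UNIV. (if i = opt_arm r then r $ i else 0) - softmax \<theta> $ i * r $ i)"
    unfolding inst_regret_def pi_star_def inner_vec_def
    by (rule sum.cong) (auto simp: algebra_simps)
  then show ?thesis by (simp add: sum_subtractf policy_value_def)
qed

lemma opt_arm_max:
  fixes r :: "real^'k::finite"
  assumes no_ties: "\<forall>a b. a \<noteq> b \<longrightarrow> r $ a \<noteq> r $ b"
  shows "r $ b \<le> r $ opt_arm r"
proof -
  have "Max (range (\<lambda>c. r $ c)) \<in> range (\<lambda>c. r $ c)" by (rule Max_in) auto
  then obtain a where a: "Max (range (\<lambda>c. r $ c)) = r $ a" by (rule rangeE)
  have max: "\<forall>c. r $ c \<le> r $ a" unfolding a[symmetric] by simp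
  have "opt_arm r = a" unfolding opt_arm_def
  proof (rule the_equality)
    fix a' assume "\<forall>c. r $ c \<le> r $ a'"
    then have "r $ a' = r $ a" using max by (meson order_antisym)
    then show "a' = a" using no_ties by metis
  qed (fact max)
  then show ?thesis using max by simp
qed

lemma gradient_domination_scalar:
  fixes q s g K R \<eta> :: real
  assumes g: "g = q * s + (1 - K * q) / \<eta>" and q: "0 < q" and s: "0 \<le> s" "s \<le> 2 * R"
    and K: "1 \<le> K" and \<eta>: "0 < \<eta>"
  shows "s \<le> 2 * K / \<eta> + (K * \<eta> + 8 * R * \<eta>\<^sup>2) * g\<^sup>2"
proof (cases "1 / (2 * K) \<le> q")
  case True
  \<comment> \<open>a well-explored arm: the policy-gradient part \<open>q * s\<close> of \<open>g\<close> controls \<open>s\<close>\<close>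
  have "q * s = g - 1 / \<eta> + K * q / \<eta>" using g by (simp add: diff_divide_distrib)
  moreover have "0 < 1 / \<eta>" using \<eta> by simp
  ultimately have "q * s \<le> \<bar>g\<bar> + K * q / \<eta>" using abs_ge_self[of g] by linarith
  then have s_le: "s \<le> \<bar>g\<bar> / q + K / \<eta>" using q by (simp add: field_simps)
  have "1 * \<bar>g\<bar> \<le> 2 * K * q * \<bar>g\<bar>"
    using True q K by (intro mult_right_mono) (auto simp: field_simps)
  then have "\<bar>g\<bar> / q \<le> 2 * K * \<bar>g\<bar>" using q by (simp add: field_simps)
  moreover have "2 * \<bar>g\<bar> \<le> 1 / \<eta> + \<eta> * g\<^sup>2"
    using sum_squares_bound[of 1 "\<eta> * \<bar>g\<bar>"] \<eta> by (simp add: field_simps power2_eq_square)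
  then have "2 * K * \<bar>g\<bar> \<le> K * (1 / \<eta> + \<eta> * g\<^sup>2)"
    using K by (simp add: mult_left_mono flip: mult.assoc)
  ultimately have "s \<le> K * (1 / \<eta> + \<eta> * g\<^sup>2) + K / \<eta>" using s_le by linarith
  moreover have "K * (1 / \<eta> + \<eta> * g\<^sup>2) + K / \<eta> = 2 * K / \<eta> + K * \<eta> * g\<^sup>2"
    by (simp add: algebra_simps)
  moreover have "0 \<le> 8 * R * \<eta>\<^sup>2 * g\<^sup>2" using s by simp
  ultimately show ?thesis by (simp add: algebra_simps)
next
  case False
  \<comment> \<open>a starved arm: the barrier part alone forces \<open>g \<ge> 1/(2\<eta>)\<close>\<close>
  then have "K * q \<le> 1/2" using K q by (simp add: field_simps)
  moreover have "\<eta> * g = \<eta> * (q * s) + (1 - K * q)" using g \<eta> by (simp add: field_simps)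
  moreover have "0 \<le> \<eta> * (q * s)" using \<eta> q s by simp
  ultimately have "1/2 \<le> \<eta> * g" by linarith
  then have "1/2 * (1/2) \<le> (\<eta> * g) * (\<eta> * g)" by (intro mult_mono) auto
  then have "8 * R * (1/4) \<le> 8 * R * (\<eta>\<^sup>2 * g\<^sup>2)"
    using s by (intro mult_left_mono) (simp_all add: power2_eq_square mult_ac)
  moreover have "0 \<le> 2 * K / \<eta>" "0 \<le> K * \<eta> * g\<^sup>2" using \<eta> K by auto
  ultimately show ?thesis using s(2) by (simp add: algebra_simps)
qed

lemma suboptimality_le_barrier_grad:
  fixes r \<theta> :: "real^'k::finite"
  assumes opt: "\<And>b. r $ b \<le> r $ a" and r: "\<And>b. \<bar>r $ b\<bar> \<le> R" and \<eta>: "0 < \<eta>"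
  shows "r $ a - policy_value r \<theta>
           \<le> 2 * real CARD('k) / \<eta> + (real CARD('k) * \<eta> + 8 * R * \<eta>\<^sup>2) * (barrier_grad \<eta> r \<theta> a)\<^sup>2"
proof (rule gradient_domination_scalar)
  show "barrier_grad \<eta> r \<theta> a
          = softmax \<theta> $ a * (r $ a - policy_value r \<theta>) + (1 - real CARD('k) * softmax \<theta> $ a) / \<eta>"
    unfolding barrier_grad_def by simp
  show "0 \<le> r $ a - policy_value r \<theta>" "r $ a - policy_value r \<theta> \<le> 2 * R"
    using policy_value_le_max[OF opt, of \<theta>] abs_policy_value_le[OF r, of \<theta>] r[of a]
    by (simp_all add: abs_le_iff)
qed (use softmax_pos \<eta> in auto)

lemma lbsgb_rate_arith:
  fixes t R K c X Xb :: real
  defines "M \<equiv> K * t + 8 * R * t\<^sup>2" and "\<alpha> \<equiv> c / t ^ 3"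
  assumes t: "1 \<le> t" and R: "0 \<le> R" and K: "1 \<le> K" and c: "0 < c"
    and X: "X \<le> Xb" and Xb: "0 \<le> Xb"
  shows "t ^ 7 * (2 * K / t + M * \<alpha> * (10 * R + K / t) * (R + K / t)\<^sup>2) + M / \<alpha> * X
           \<le> (2 * K + (K + 8 * R) * c * (10 * R + K) * (R + K)\<^sup>2 + (K + 8 * R) * Xb / c) * t ^ 6"
proof -
  have t0: "0 < t" using t by simp
  have M0: "0 \<le> M" unfolding M_def using t0 K R by simp
  have M_le: "M \<le> (K + 8 * R) * t\<^sup>2"
    unfolding M_def using t K mult_left_mono[of t "t\<^sup>2" K] by (simp add: power2_eq_square algebra_simps)
  have exploration: "t ^ 7 * (2 * K / t) = 2 * K * t ^ 6"
    using t0 by (simp add: field_simps eval_nat_numeral)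
  have noise_le: "(10 * R + K / t) * (R + K / t)\<^sup>2 \<le> (10 * R + K) * (R + K)\<^sup>2"
    using t K R by (intro mult_mono power_mono add_left_mono) (auto simp: divide_le_eq)
  have M_ct: "M * c * t ^ 4 \<le> (K + 8 * R) * c * t ^ 6"
    using M_le c t0 mult_right_mono[OF M_le, of "c * t ^ 4"] by (simp add: eval_nat_numeral mult_ac)
  have bound: "M * c * t ^ 4 * ((10 * R + K / t) * (R + K / t)\<^sup>2)
                 \<le> (K + 8 * R) * c * t ^ 6 * ((10 * R + K) * (R + K)\<^sup>2)"
    by (rule mult_mono[OF M_ct noise_le]) (use c t0 K R in auto)
  have "t ^ 7 * (M * \<alpha> * (10 * R + K / t) * (R + K / t)\<^sup>2)
          = M * c * t ^ 4 * ((10 * R + K / t) * (R + K / t)\<^sup>2)"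
    unfolding \<alpha>_def using t0 by (simp add: field_simps eval_nat_numeral)
  then have gradient_noise: "t ^ 7 * (M * \<alpha> * (10 * R + K / t) * (R + K / t)\<^sup>2)
                               \<le> (K + 8 * R) * c * (10 * R + K) * (R + K)\<^sup>2 * t ^ 6"
    using bound by (simp only: mult_ac)
  have "M / \<alpha> * X \<le> M / \<alpha> * Xb"
    unfolding \<alpha>_def using M0 c t0 X by (intro mult_left_mono) auto
  also have "\<dots> = M * t ^ 3 / c * Xb" unfolding \<alpha>_def by simp
  also have "\<dots> \<le> (K + 8 * R) * t ^ 6 / c * Xb"
  proof -
    have "M * t ^ 3 \<le> (K + 8 * R) * t\<^sup>2 * t ^ 4"
      using M_le M0 t0 power_increasing[of 3 4 t] t by (intro mult_mono) auto
    then show ?thesis using c Xb by (intro mult_right_mono divide_right_mono) (auto simp: eval_nat_numeral mult_ac)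
  qed
  finally have initialisation: "M / \<alpha> * X \<le> (K + 8 * R) * Xb / c * t ^ 6" by (simp add: mult_ac)
  show ?thesis using exploration gradient_noise initialisation by (simp add: algebra_simps)
qed

definition lbsgb_regret_const :: "real \<Rightarrow> real \<Rightarrow> real" where
  "lbsgb_regret_const K R = 2 * K + (K + 8 * R) * (R + K) * ((10 * R + K) / 2 + 2 * (2 * R + K * ln K))"

lemma lbsgb_regret_const_pos: "1 \<le> K \<Longrightarrow> 0 \<le> R \<Longrightarrow> 0 < lbsgb_regret_const K R"
  unfolding lbsgb_regret_const_def by (intro add_pos_nonneg mult_nonneg_nonneg) auto

locale bounded_bandit = prob_space D for D :: "(real^'k::finite) measure" +
  fixes Rmax :: real
  assumes sets_D: "sets D = sets borel"
    and bounded_rewards: "AE R in D. \<forall>a. \<bar>R $ a\<bar> \<le> Rmax"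
begin

lemma integrable_reward_vector: "integrable D (\<lambda>R. R)"
proof (rule integrable_const_bound)
  show "AE R in D. norm R \<le> real CARD('k) * Rmax"
    using bounded_rewards
  proof eventually_elim
    case (elim R)
    have "norm R \<le> (\<Sum>i\<in>UNIV. \<bar>R $ i\<bar>)" by (rule norm_le_l1_cart)
    also have "\<dots> \<le> (\<Sum>i::'k\<in>UNIV. Rmax)" using elim by (intro sum_mono) auto
    finally show ?case by simp
  qed
qed (use measurable_ident_sets[OF sets_D] in auto)

lemma integrable_reward: "integrable D (\<lambda>R. R $ a)"
  using integrable_bounded_linear[OF bounded_linear_vec_nth integrable_reward_vector] .

lemma integral_reward: "(\<integral>R. R $ a \<partial>D) = mean_reward D $ a"
  unfolding mean_reward_def
  using integral_bounded_linear[OF bounded_linear_vec_nth integrable_reward_vector] .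

lemma bounded_reward: "AE R in D. \<bar>R $ a\<bar> \<le> Rmax"
  using bounded_rewards by eventually_elim blast

lemma abs_mean_reward_le: "\<bar>mean_reward D $ a\<bar> \<le> Rmax"
proof -
  have upper: "AE R in D. R $ a \<le> Rmax" and lower: "AE R in D. - Rmax \<le> R $ a"
    using bounded_reward[of a] by (eventually_elim, simp add: abs_le_iff)+
  have "(\<integral>R. R $ a \<partial>D) \<le> (\<integral>R. Rmax \<partial>D)"
    by (rule integral_mono_AE[OF integrable_reward integrable_const upper])
  moreover have "(\<integral>R. - Rmax \<partial>D) \<le> (\<integral>R. R $ a \<partial>D)"
    by (rule integral_mono_AE[OF integrable_const integrable_reward lower])
  ultimately show ?thesis unfolding integral_reward by (simp add: prob_space abs_le_iff)
qed

lemma expected_lbsgb_step_le: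
  fixes \<theta> :: "real^'k" and F :: "real^'k \<Rightarrow> real" and \<alpha> \<eta> B w :: real
  defines "r \<equiv> mean_reward D"
    and "G \<equiv> Rmax + real CARD('k) / \<eta>" and "L \<equiv> 10 * Rmax + real CARD('k) / \<eta>"
  assumes F: "\<And>\<theta>'. F \<theta>' \<le> B + w * (Rmax - barrier_objective \<eta> r \<theta>')" and B: "0 \<le> B" and w: "0 \<le> w"
    and \<alpha>: "0 < \<alpha>" and \<eta>: "0 < \<eta>" and small: "\<alpha> * G \<le> 1/2"
  shows "(\<Sum>a\<in>UNIV. softmax \<theta> $ a * (\<integral>R. F (lbsgb_step \<alpha> \<eta> \<theta> a (R $ a)) \<partial>D))
           \<le> B + w * (Rmax - barrier_objective \<eta> r \<theta> + L * (\<alpha> * G)\<^sup>2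
                       - \<alpha> * (\<Sum>b\<in>UNIV. (barrier_grad \<eta> r \<theta> b)\<^sup>2))"
proof -
  define g where "g = barrier_grad \<eta> r \<theta>"
  define ip where "ip a x = (\<Sum>b\<in>UNIV. g b * stoch_grad \<eta> \<theta> a x b)" for a x
  define \<Psi> where "\<Psi> = B + w * (Rmax - barrier_objective \<eta> r \<theta> + L * (\<alpha> * G)\<^sup>2)"
  have r: "\<bar>r $ b\<bar> \<le> Rmax" for b unfolding r_def by (rule abs_mean_reward_le)
  have step: "F (lbsgb_step \<alpha> \<eta> \<theta> a x) \<le> \<Psi> - w * \<alpha> * ip a x \<and> 0 \<le> \<Psi> - w * \<alpha> * ip a x"
    if x: "\<bar>x\<bar> \<le> Rmax" for a x
  proof -
    define \<theta>' where "\<theta>' = lbsgb_step \<alpha> \<eta> \<theta> a x"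
    have "barrier_objective \<eta> r \<theta> + \<alpha> * ip a x - L * (\<alpha> * G)\<^sup>2 \<le> barrier_objective \<eta> r \<theta>'"
      using barrier_objective_lbsgb_step_ge[OF x r \<alpha> \<eta>] small
      unfolding \<theta>'_def ip_def g_def L_def G_def by simp
    from mult_left_mono[OF this w]
    have "B + w * (Rmax - barrier_objective \<eta> r \<theta>') \<le> \<Psi> - w * \<alpha> * ip a x"
      unfolding \<Psi>_def by (simp add: algebra_simps)
    moreover have "0 \<le> B + w * (Rmax - barrier_objective \<eta> r \<theta>')"
      using barrier_objective_le[OF r \<eta>, of \<theta>'] B w by simp
    ultimately show ?thesis using F[of \<theta>'] unfolding \<theta>'_def by linarith
  qed
  have expectation: "(\<integral>R. F (lbsgb_step \<alpha> \<eta> \<theta> a (R $ a)) \<partial>D) \<le> \<Psi> - w * \<alpha> * ip a (r $ a)" for a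
  proof -
    \<comment> \<open>The integrand need not be integrable (its Bochner integral is then \<open>0\<close>), so we compare it
      with a nonnegative majorant that is affine in the observed reward.\<close>
    have "integrable D (\<lambda>R. \<Psi> - w * \<alpha> * ip a (R $ a))"
      unfolding ip_def inner_stoch_grad_eq using integrable_reward[of a] by simp
    moreover have "(\<integral>R. \<Psi> - w * \<alpha> * ip a (R $ a) \<partial>D) = \<Psi> - w * \<alpha> * ip a (r $ a)"
      unfolding ip_def inner_stoch_grad_eq r_def
      using integrable_reward[of a] integral_reward[of a] by (simp add: prob_space algebra_simps)
    moreover have "AE R in D. F (lbsgb_step \<alpha> \<eta> \<theta> a (R $ a)) \<le> \<Psi> - w * \<alpha> * ip a (R $ a)"
                  "AE R in D. 0 \<le> \<Psi> - w * \<alpha> * ip a (R $ a)"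
      using bounded_reward[of a] by (auto elim!: eventually_mono dest: step[of _ a])
    ultimately show ?thesis using integral_mono_AE' by metis
  qed
  have "(\<Sum>a\<in>UNIV. softmax \<theta> $ a * (\<integral>R. F (lbsgb_step \<alpha> \<eta> \<theta> a (R $ a)) \<partial>D))
        \<le> (\<Sum>a\<in>UNIV. softmax \<theta> $ a * (\<Psi> - w * \<alpha> * ip a (r $ a)))"
    using expectation by (intro sum_mono mult_left_mono) (auto intro: less_imp_le softmax_pos)
  also have "\<dots> = \<Psi> - w * \<alpha> * (\<Sum>b\<in>UNIV. (g b)\<^sup>2)"
    using sum_softmax_inner_stoch_grad[of \<theta> g \<eta> r]
    unfolding ip_def g_def
    by (simp add: algebra_simps sum_subtractf sum_distrib_left[symmetric] sum_distrib_right[symmetric]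
        sum_softmax power2_eq_square)
  finally show ?thesis unfolding \<Psi>_def g_def by (simp add: algebra_simps)
qed

lemma exp_regret_le_potential:
  fixes \<theta> :: "real^'k" and \<alpha> \<eta> :: real
  defines "K \<equiv> real CARD('k)"
  defines "M \<equiv> K * \<eta> + 8 * Rmax * \<eta>\<^sup>2"
  assumes opt: "\<And>b. mean_reward D $ b \<le> mean_reward D $ opt_arm (mean_reward D)"
    and \<alpha>: "0 < \<alpha>" and \<eta>: "0 < \<eta>" and small: "\<alpha> * (Rmax + K / \<eta>) \<le> 1/2"
  shows "exp_regret D \<alpha> \<eta> n \<theta>
           \<le> real n * (2 * K / \<eta> + M * \<alpha> * (10 * Rmax + K / \<eta>) * (Rmax + K / \<eta>)\<^sup>2)
             + M / \<alpha> * (Rmax - barrier_objective \<eta> (mean_reward D) \<theta>)"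
proof -
  define r where "r = mean_reward D"
  define G where "G = Rmax + K / \<eta>"
  define L where "L = 10 * Rmax + K / \<eta>"
  define c where "c = 2 * K / \<eta> + M * \<alpha> * L * G\<^sup>2"
  have r: "\<bar>r $ b\<bar> \<le> Rmax" for b unfolding r_def by (rule abs_mean_reward_le)
  have R0: "0 \<le> Rmax" using r[of undefined] by linarith
  have M: "0 \<le> M" unfolding M_def K_def using \<eta> R0 by simp
  have c: "0 \<le> c" unfolding c_def L_def G_def K_def using M \<alpha> \<eta> R0 by simp
  have "exp_regret D \<alpha> \<eta> n \<theta> \<le> real n * c + M / \<alpha> * (Rmax - barrier_objective \<eta> r \<theta>)" for n \<theta>
  proof (induction n arbitrary: \<theta>)
    case 0
    then show ?case using barrier_objective_le[OF r \<eta>, of \<theta>] M \<alpha> by simp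
  next
    case (Suc n)
    define g where "g = barrier_grad \<eta> r \<theta>"
    have "r $ opt_arm r - policy_value r \<theta> \<le> 2 * K / \<eta> + M * (g (opt_arm r))\<^sup>2"
      using suboptimality_le_barrier_grad[OF opt[folded r_def] r \<eta>] unfolding g_def K_def M_def .
    also have "M * (g (opt_arm r))\<^sup>2 \<le> M * (\<Sum>b\<in>UNIV. (g b)\<^sup>2)"
      using M by (intro mult_left_mono member_le_sum) auto
    moreover have "(\<Sum>a\<in>UNIV. softmax \<theta> $ a *
                      (\<integral>R. exp_regret D \<alpha> \<eta> n (lbsgb_step \<alpha> \<eta> \<theta> a (R $ a)) \<partial>D))
        \<le> real n * c + M / \<alpha> * (Rmax - barrier_objective \<eta> r \<theta> + L * (\<alpha> * G)\<^sup>2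
                                   - \<alpha> * (\<Sum>b\<in>UNIV. (g b)\<^sup>2))"
      unfolding g_def r_def G_def L_def K_def
      by (rule expected_lbsgb_step_le) (use Suc.IH c M \<alpha> \<eta> small in \<open>auto simp: r_def K_def\<close>)
    ultimately have "exp_regret D \<alpha> \<eta> (Suc n) \<theta>
        \<le> 2 * K / \<eta> + M * (\<Sum>b\<in>UNIV. (g b)\<^sup>2) + real n * c
          + M / \<alpha> * (Rmax - barrier_objective \<eta> r \<theta> + L * (\<alpha> * G)\<^sup>2 - \<alpha> * (\<Sum>b\<in>UNIV. (g b)\<^sup>2))"
      unfolding exp_regret.simps inst_regret_eq r_def[symmetric] by linarith
    also have "\<dots> = real (Suc n) * c + M / \<alpha> * (Rmax - barrier_objective \<eta> r \<theta>)"
      unfolding c_def using \<alpha> \<eta> by (simp add: field_simps power2_eq_square)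
    finally show ?case .
  qed
  then show ?thesis unfolding c_def L_def G_def r_def .
qed

lemma exp_regret_rate:
  fixes T :: nat
  defines "K \<equiv> real CARD('k)"
  assumes opt: "\<And>b. mean_reward D $ b \<le> mean_reward D $ opt_arm (mean_reward D)"
    and T: "1 \<le> T"
  shows "exp_regret D (1 / (2 * (Rmax + K)) * real T powr (-3/7)) (real T powr (1/7)) T 0
           \<le> lbsgb_regret_const K Rmax * real T powr (6/7)"
proof -
  define c where "c = 1 / (2 * (Rmax + K))"
  define t where "t = real T powr (1/7)"
  define M where "M = K * t + 8 * Rmax * t\<^sup>2"
  have K: "1 \<le> K" unfolding K_def by simp
  have R0: "0 \<le> Rmax" using abs_mean_reward_le[of undefined] by linarith
  have c: "0 < c" unfolding c_def using K R0 by simp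
  have t: "1 \<le> t" unfolding t_def using T by (intro ge_one_powr_ge_zero) auto
  have t_pow: "t ^ n = real T powr (real n / 7)" for n
    unfolding t_def using T by (simp add: powr_power)
  have T_eq: "real T = t ^ 7" using t_pow[of 7] T by simp
  have "real T powr (-3/7) = real T powr (- (3/7))" by simp
  then have step_size: "c * real T powr (-3/7) = c / t ^ 3"
    unfolding powr_minus_divide t_pow by simp
  have "c / t ^ 3 * (Rmax + K / t) \<le> c * (Rmax + K)"
    using c t K R0 by (intro mult_mono) (auto simp: divide_le_eq one_le_power)
  moreover have "c * (Rmax + K) = 1/2" unfolding c_def using K R0 by simp
  ultimately have small: "c / t ^ 3 * (Rmax + real CARD('k) / t) \<le> 1/2" unfolding K_def by linarith
  have initial_gap: "Rmax - barrier_objective t (mean_reward D) 0 \<le> 2 * Rmax + K * ln K"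
    unfolding K_def by (rule barrier_objective_zero_ge[OF abs_mean_reward_le t])
  have \<alpha>: "0 < c / t ^ 3" and \<eta>: "0 < t" using c t by auto
  have "exp_regret D (c / t ^ 3) t T 0
        \<le> t ^ 7 * (2 * K / t + M * (c / t ^ 3) * (10 * Rmax + K / t) * (Rmax + K / t)\<^sup>2)
          + M / (c / t ^ 3) * (Rmax - barrier_objective t (mean_reward D) 0)"
    using exp_regret_le_potential[OF opt \<alpha> \<eta> small, where n=T and \<theta>=0]
    unfolding K_def M_def T_eq .
  also have "\<dots> \<le> t ^ 7 * (2 * K / t + M * (c / t ^ 3) * (10 * Rmax + K / t) * (Rmax + K / t)\<^sup>2)
                    + M / (c / t ^ 3) * (2 * Rmax + K * ln K)"
    using initial_gap \<alpha> K R0 t c unfolding M_def by (intro add_left_mono mult_left_mono) auto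
  also have "\<dots> \<le> (2 * K + (K + 8 * Rmax) * c * (10 * Rmax + K) * (Rmax + K)\<^sup>2
                    + (K + 8 * Rmax) * (2 * Rmax + K * ln K) / c) * t ^ 6"
    unfolding M_def using K R0 by (intro lbsgb_rate_arith t c) auto
  also have "2 * K + (K + 8 * Rmax) * c * (10 * Rmax + K) * (Rmax + K)\<^sup>2
               + (K + 8 * Rmax) * (2 * Rmax + K * ln K) / c = lbsgb_regret_const K Rmax"
    unfolding lbsgb_regret_const_def c_def using K R0 by (simp add: field_simps power2_eq_square)
  also have "t ^ 6 = real T powr (6/7)" unfolding t_pow by simp
  finally show ?thesis unfolding c_def[symmetric] t_def[symmetric] step_size .
qed

end

lemma gap_attained:
  fixes r :: "real^'k::finite"
  assumes "2 \<le> CARD('k)"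
  shows "\<exists>a b. a \<noteq> b \<and> gap r = \<bar>r $ a - r $ b\<bar>"
proof -
  define S where "S = {\<bar>r $ a - r $ b\<bar> | a b. a \<noteq> b}"
  have "S \<subseteq> (\<lambda>(a, b). \<bar>r $ a - r $ b\<bar>) ` UNIV" unfolding S_def by auto
  then have "finite S" by (rule finite_subset) auto
  moreover have "S \<noteq> {}"
    using assms card_le_Suc0_iff_eq[of "UNIV :: 'k set"] unfolding S_def by auto
  ultimately have "gap r \<in> S" unfolding gap_def S_def[symmetric] by (rule Min_in)
  then show ?thesis unfolding S_def by blast
qed

lemma one_le_gap_powr:
  fixes r :: "real^'k::finite"
  assumes "2 \<le> CARD('k)" and no_ties: "\<forall>a b. a \<noteq> b \<longrightarrow> r $ a \<noteq> r $ b"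
    and r: "\<And>b. \<bar>r $ b\<bar> \<le> R" and p: "0 \<le> p"
  shows "1 \<le> (2 * R) powr p * gap r powr (- p)"
proof -
  obtain a b where "a \<noteq> b" and gap: "gap r = \<bar>r $ a - r $ b\<bar>" using gap_attained[OF assms(1)] by blast
  then have "0 < gap r" "gap r \<le> 2 * R" using no_ties r[of a] r[of b] by auto
  then have "(2 * R) powr (- p) \<le> gap r powr (- p)" using p by (intro powr_mono2') auto
  then have "(2 * R) powr p * (2 * R) powr (- p) \<le> (2 * R) powr p * gap r powr (- p)"
    by (intro mult_left_mono) auto
  then show ?thesis using \<open>0 < gap r\<close> \<open>gap r \<le> 2 * R\<close> by (simp add: powr_add[symmetric])
qed

theorem corollary5p6:
  fixes Rmax :: real
  assumes K2: "CARD('k::finite) \<ge> 2"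
    and Rpos: "Rmax > 0"
  shows "\<exists>C>0. \<forall>D :: (real^'k) measure.
           prob_space D \<longrightarrow> sets D = sets borel \<longrightarrow>
           (AE R in D. \<forall>a. \<bar>R$a\<bar> \<le> Rmax) \<longrightarrow>
           (\<forall>a b. a \<noteq> b \<longrightarrow> mean_reward D $ a \<noteq> mean_reward D $ b) \<longrightarrow>
           (\<exists>c\<^sub>\<alpha>>0. \<exists>c\<^sub>\<eta>>0. \<forall>T::nat. T \<ge> 1 \<longrightarrow>
              exp_regret D (c\<^sub>\<alpha> * real T powr (-3/7)) (c\<^sub>\<eta> * real T powr (1/7)) T 0
                \<le> C * gap (mean_reward D) powr (-2/7) * real T powr (6/7))"
proof -
  define K where "K = real CARD('k)"
  define C where "C = lbsgb_regret_const K Rmax * (2 * Rmax) powr (2/7)"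
  have K: "1 \<le> K" unfolding K_def by simp
  have C_pos: "0 < C" unfolding C_def using lbsgb_regret_const_pos[OF K] Rpos by simp
  show ?thesis
  proof (rule exI[of _ C], intro conjI C_pos allI impI)
    fix D :: "(real^'k) measure"
    assume "prob_space D" "sets D = sets borel" "AE R in D. \<forall>a. \<bar>R$a\<bar> \<le> Rmax"
      and no_ties: "\<forall>a b. a \<noteq> b \<longrightarrow> mean_reward D $ a \<noteq> mean_reward D $ b"
    then interpret bounded_bandit D Rmax by (simp add: bounded_bandit_def bounded_bandit_axioms_def)
    have "lbsgb_regret_const K Rmax \<le> C * gap (mean_reward D) powr (-2/7)"
      using one_le_gap_powr[OF K2 no_ties abs_mean_reward_le, of "2/7"] lbsgb_regret_const_pos[OF K] Rpos
      unfolding C_def by (simp add: mult.assoc)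
    then have "exp_regret D (1 / (2 * (Rmax + K)) * real T powr (-3/7)) (1 * real T powr (1/7)) T 0
                 \<le> C * gap (mean_reward D) powr (-2/7) * real T powr (6/7)" if "1 \<le> T" for T
      using exp_regret_rate[OF opt_arm_max[OF no_ties] that] unfolding K_def[symmetric]
      by (simp add: order_trans[OF _ mult_right_mono])
    moreover have "0 < 1 / (2 * (Rmax + K))" using K Rpos by simp
    ultimately show "\<exists>c\<^sub>\<alpha>>0. \<exists>c\<^sub>\<eta>>0. \<forall>T::nat. T \<ge> 1 \<longrightarrow>
              exp_regret D (c\<^sub>\<alpha> * real T powr (-3/7)) (c\<^sub>\<eta> * real T powr (1/7)) T 0
                \<le> C * gap (mean_reward D) powr (-2/7) * real T powr (6/7)"
      using zero_less_one by blast
  qed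
qed

end
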